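(* Let $m\in\mathbb{N}$, let $(y_k)_{k=1}^m$ be a $1$-unconditional basic sequence and let $\varepsilon>0$. Then there exist $n\in\mathbb{N}$ and a block basis $(x_k)_{k=1}^m$ of the basis $(e_{i,j})_{i,j=1}^n$ of $B(\ell_\infty^n)$ (ordered lexicographically) such that $(x_k)_{k=1}^m$ is $(1+\varepsilon)$-equivalent to $(y_k)_{k=1}^m$, i.e. $(1+\varepsilon)^{-1}\|\sum_k b_ky_k\|\le\|\sum_k b_kx_k\|\le(1+\varepsilon)\|\sum_k b_ky_k\|$ for all scalars $(b_k)$.
   Context: $B(\ell_\infty^n)$ is the $n^2$-dimensional Banach space of linear operators on $\ell_\infty^n$ with the operator norm. With $(f_k)_{k=1}^n$ the unit vector basis of $\ell_\infty^n$, $e_{i,j}$ is the operator with $e_{i,j}(f_k)=f_j$ if $k=i$ and $e_{i,j}(f_k)=0$ otherwise. Then $\|\sum_{i,j=1}^n a_{i,j}e_{i,j}\|=\max_{j\le n}\sum_{i=1}^n|a_{i,j}|$, so $(e_{i,j})$ is a $1$-unconditional basis, ordered lexicographically as $e_{11},e_{12},\dots,e_{1n},e_{21},\dots,e_{nn}$. *)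

theory Defs
  imports "HOL-Analysis.Analysis"
begin

text \<open>An operator on l_infinity^n is represented by its coefficient array a i j
  (coefficient of e_{i,j}), indices i, j < n (0-based); entries outside are required
  to vanish where relevant.\<close>

definition opnorm :: "nat \<Rightarrow> (nat \<Rightarrow> nat \<Rightarrow> real) \<Rightarrow> real" where
  "opnorm n a = Max (insert 0 ((\<lambda>j. \<Sum>i<n. \<bar>a i j\<bar>) ` {..<n}))"

definition mat_supp :: "nat \<Rightarrow> (nat \<Rightarrow> nat \<Rightarrow> real) \<Rightarrow> (nat \<times> nat) set" where
  "mat_supp n a = {(i, j). i < n \<and> j < n \<and> a i j \<noteq> 0}"

definition lexpos :: "nat \<Rightarrow> nat \<times> nat \<Rightarrow> nat" where
  "lexpos n p = fst p * n + snd p"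

definition is_block_basis :: "nat \<Rightarrow> nat \<Rightarrow> (nat \<Rightarrow> nat \<Rightarrow> nat \<Rightarrow> real) \<Rightarrow> bool" where
  "is_block_basis n m x \<longleftrightarrow>
     (\<forall>k<m. \<forall>i j. x k i j \<noteq> 0 \<longrightarrow> i < n \<and> j < n) \<and>
     (\<forall>k<m. mat_supp n (x k) \<noteq> {}) \<and>
     (\<forall>k l. k < l \<and> l < m \<longrightarrow>
        (\<forall>p\<in>mat_supp n (x k). \<forall>q\<in>mat_supp n (x l). lexpos n p < lexpos n q))"

definition one_uncond_basic :: "nat \<Rightarrow> (nat \<Rightarrow> 'a::real_normed_vector) \<Rightarrow> bool" where
  "one_uncond_basic m y \<longleftrightarrow>
     (\<forall>k<m. y k \<noteq> 0) \<and>
     (\<exists>K. \<forall>b::nat \<Rightarrow> real. \<forall>j\<le>m.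
         norm (\<Sum>k<j. b k *\<^sub>R y k) \<le> K * norm (\<Sum>k<m. b k *\<^sub>R y k)) \<and>
     (\<forall>(b::nat \<Rightarrow> real) (s::nat \<Rightarrow> real). (\<forall>k<m. s k = 1 \<or> s k = -1) \<longrightarrow>
         norm (\<Sum>k<m. (s k * b k) *\<^sub>R y k) = norm (\<Sum>k<m. b k *\<^sub>R y k))"

end

theory Submission
  imports Defs
begin

(* Write N b for the norm of the sum of b k y k over k < m; it is a norm on coefficient vectors.
   By the finite-dimensional Hahn-Banach theorem every c is normed by a linear functional
   dominated by N, and the functionals norming the points of a fine finite grid of the unit
   ball give N up to the factor 1 + epsilon.  Because the basis is 1-unconditional, a functional
   A dominated by N even satisfies (sum over k of |A k * b k|) <= N b.  Writing the J functionals
   A_j as the columns of a matrix, x_k = (sum over j of A_j k e_{k,j}) lives in row k, so the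
   x_k are successive blocks, and the j-th column sum of (sum over k of b_k x_k) is
   (sum over k of |A_j k * b_k|).  The operator norm, the largest column sum, therefore lies
   between N b / (1 + epsilon) and N b. *)

section \<open>Finite-dimensional Hahn-Banach theorem\<close>

definition sublinear :: "((nat \<Rightarrow> real) \<Rightarrow> real) \<Rightarrow> bool" where
  "sublinear q \<longleftrightarrow>
     (\<forall>x y. q (\<lambda>k. x k + y k) \<le> q x + q y) \<and>
     (\<forall>s x. 0 < s \<longrightarrow> q (\<lambda>k. s * x k) = s * q x)"

definition depends_below :: "nat \<Rightarrow> ((nat \<Rightarrow> real) \<Rightarrow> real) \<Rightarrow> bool" where
  "depends_below m q \<longleftrightarrow> (\<forall>d d'. (\<forall>k<m. d k = d' k) \<longrightarrow> q d = q d')"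

lemma sublinear_add: "sublinear q \<Longrightarrow> q (\<lambda>k. x k + y k) \<le> q x + q y"
  by (simp add: sublinear_def)

lemma sublinear_scale: "sublinear q \<Longrightarrow> 0 < s \<Longrightarrow> q (\<lambda>k. s * x k) = s * q x"
  by (simp add: sublinear_def)

lemma sublinear_zero: "sublinear q \<Longrightarrow> q (\<lambda>k. 0) = 0"
  using sublinear_scale[of q 2 "\<lambda>k. 0"] by simp

lemma sublinear_scale_nonneg:
  assumes "sublinear q" and "0 \<le> s"
  shows "q (\<lambda>k. s * x k) = s * q x"
  using assms sublinear_zero[OF assms(1)] sublinear_scale[OF assms(1)] by (cases "s = 0") auto

lemma sublinear_extension_constant:
  assumes q: "sublinear q"
    and a: "\<And>d. \<forall>k\<ge>m. d k = 0 \<Longrightarrow> (\<Sum>k<m. a k * d k) \<le> q d"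
  shows "\<exists>\<alpha>. \<forall>u. (\<forall>k\<ge>m. u k = 0) \<longrightarrow>
           (\<Sum>k<m. a k * u k) - q (\<lambda>k. u k - (if k = m then 1 else 0)) \<le> \<alpha> \<and>
           \<alpha> \<le> q (\<lambda>k. u k + (if k = m then 1 else 0)) - (\<Sum>k<m. a k * u k)"
proof -
  define \<phi> where "\<phi> d = (\<Sum>k<m. a k * d k)" for d
  define e where "e k = (if k = m then 1 else (0::real))" for k
  let ?S = "{\<phi> u - q (\<lambda>k. u k - e k) | u. \<forall>k\<ge>m. u k = 0}"
  have sep: "\<phi> u - q (\<lambda>k. u k - e k) \<le> q (\<lambda>k. v k + e k) - \<phi> v"
    if "\<forall>k\<ge>m. u k = 0" "\<forall>k\<ge>m. v k = 0" for u v
  proof -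
    have "\<phi> u + \<phi> v = \<phi> (\<lambda>k. u k + v k)"
      by (simp add: \<phi>_def sum.distrib distrib_left)
    also have "\<dots> \<le> q (\<lambda>k. (u k - e k) + (v k + e k))"
      using a[of "\<lambda>k. u k + v k"] that by (simp add: \<phi>_def)
    also have "\<dots> \<le> q (\<lambda>k. u k - e k) + q (\<lambda>k. v k + e k)"
      by (rule sublinear_add[OF q])
    finally show ?thesis by simp
  qed
  have "bdd_above ?S"
    using sep[of _ "\<lambda>k. 0"] by (auto intro!: bdd_aboveI)
  then have "\<phi> u - q (\<lambda>k. u k - e k) \<le> Sup ?S" if "\<forall>k\<ge>m. u k = 0" for u
    using that by (intro cSup_upper) auto
  moreover have "Sup ?S \<le> q (\<lambda>k. v k + e k) - \<phi> v" if "\<forall>k\<ge>m. v k = 0" for v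
    using sep that by (intro cSup_least) auto
  ultimately show ?thesis
    unfolding \<phi>_def e_def by blast
qed

lemma extension_constant_dominated:
  assumes q: "sublinear q"
    and a: "\<And>d. \<forall>k\<ge>m. d k = 0 \<Longrightarrow> (\<Sum>k<m. a k * d k) \<le> q d"
    and \<alpha>: "\<forall>u. (\<forall>k\<ge>m. u k = 0) \<longrightarrow>
           (\<Sum>k<m. a k * u k) - q (\<lambda>k. u k - (if k = m then 1 else 0)) \<le> \<alpha> \<and>
           \<alpha> \<le> q (\<lambda>k. u k + (if k = m then 1 else 0)) - (\<Sum>k<m. a k * u k)"
    and d: "\<forall>k>m. d k = 0"
  shows "(\<Sum>k<m. a k * d k) + \<alpha> * d m \<le> q d"
proof -
  define \<phi> where "\<phi> d = (\<Sum>k<m. a k * d k)" for d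
  define e where "e k = (if k = m then 1 else (0::real))" for k
  define s where "s = \<bar>d m\<bar>"
  define z where "z k = (if k < m then d k / s else 0)" for k
  have z: "\<forall>k\<ge>m. z k = 0" by (simp add: z_def)
  then have below: "\<phi> z - q (\<lambda>k. z k - e k) \<le> \<alpha>" and above: "\<alpha> \<le> q (\<lambda>k. z k + e k) - \<phi> z"
    using \<alpha> unfolding \<phi>_def e_def by blast+
  have \<phi>_z: "s * \<phi> z = \<phi> d" if "0 < s"
    using that by (simp add: \<phi>_def z_def sum_distrib_left)
  consider "d m = 0" | "0 < d m" | "d m < 0" by linarith
  then have "\<phi> d + \<alpha> * d m \<le> q d"
  proof cases
    case 1
    then have "\<forall>k\<ge>m. d k = 0" using d by (auto simp: le_less)
    then show ?thesis using a 1 by (simp add: \<phi>_def)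
  next
    case 2
    have s: "0 < s" using 2 by (simp add: s_def)
    have "d = (\<lambda>k. s * (z k + e k))"
      using d 2 by (intro ext, rule_tac x=k and y=m in linorder_cases) (auto simp: s_def z_def e_def)
    then have "q d = s * q (\<lambda>k. z k + e k)"
      by (simp only: sublinear_scale[OF q s])
    moreover have "s * (\<alpha> + \<phi> z) \<le> s * q (\<lambda>k. z k + e k)"
      using above s by (intro mult_left_mono) auto
    ultimately show ?thesis using \<phi>_z[OF s] 2 by (simp add: s_def algebra_simps)
  next
    case 3
    have s: "0 < s" using 3 by (simp add: s_def)
    have "d = (\<lambda>k. s * (z k - e k))"
      using d 3 by (intro ext, rule_tac x=k and y=m in linorder_cases) (auto simp: s_def z_def e_def)
    then have "q d = s * q (\<lambda>k. z k - e k)"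
      by (simp only: sublinear_scale[OF q s])
    moreover have "s * (\<phi> z - \<alpha>) \<le> s * q (\<lambda>k. z k - e k)"
      using below s by (intro mult_left_mono) auto
    ultimately show ?thesis using \<phi>_z[OF s] 3 by (simp add: s_def algebra_simps)
  qed
  then show ?thesis by (simp add: \<phi>_def)
qed

lemma sublinear_dominates_functional_supported:
  assumes "sublinear q"
  shows "\<exists>a. \<forall>d. (\<forall>k\<ge>m. d k = 0) \<longrightarrow> (\<Sum>k<m. a k * d k) \<le> q d"
proof (induction m)
  case 0
  have "0 \<le> q d" if "\<forall>k\<ge>0. d k = 0" for d
  proof -
    from that have "d = (\<lambda>k. 0)" by auto
    then show ?thesis by (simp add: sublinear_zero[OF assms])
  qed
  then show ?case by simp
next
  case (Suc m)
  then obtain a where "\<And>d. \<forall>k\<ge>m. d k = 0 \<Longrightarrow> (\<Sum>k<m. a k * d k) \<le> q d"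
    by blast
  moreover from sublinear_extension_constant[OF assms this] obtain \<alpha> where
    "\<forall>u. (\<forall>k\<ge>m. u k = 0) \<longrightarrow>
       (\<Sum>k<m. a k * u k) - q (\<lambda>k. u k - (if k = m then 1 else 0)) \<le> \<alpha> \<and>
       \<alpha> \<le> q (\<lambda>k. u k + (if k = m then 1 else 0)) - (\<Sum>k<m. a k * u k)" ..
  ultimately have "(\<Sum>k<Suc m. (a(m := \<alpha>)) k * d k) \<le> q d" if "\<forall>k\<ge>Suc m. d k = 0" for d
    using extension_constant_dominated[OF assms, of m a \<alpha> d] that by (simp add: Suc_le_eq)
  then show ?case by blast
qed

lemma sublinear_dominates_functional:
  assumes "sublinear q" and "depends_below m q"
  shows "\<exists>a. \<forall>d. (\<Sum>k<m. a k * d k) \<le> q d"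
proof -
  obtain a where a: "\<And>d. \<forall>k\<ge>m. d k = 0 \<Longrightarrow> (\<Sum>k<m. a k * d k) \<le> q d"
    using sublinear_dominates_functional_supported[OF assms(1)] by blast
  have "(\<Sum>k<m. a k * d k) \<le> q d" for d
  proof -
    let ?d = "\<lambda>k. if k < m then d k else 0"
    have "(\<Sum>k<m. a k * d k) = (\<Sum>k<m. a k * ?d k)" by simp
    also have "\<dots> \<le> q ?d" by (rule a) simp
    also have "\<dots> = q d" using assms(2) by (simp add: depends_below_def)
    finally show ?thesis .
  qed
  then show ?thesis by blast
qed

(* The one-sided directional derivative of q at c: a sublinear minorant of q that is linear
   along c, so every functional below it norms c. *)
definition tangent :: "((nat \<Rightarrow> real) \<Rightarrow> real) \<Rightarrow> (nat \<Rightarrow> real) \<Rightarrow> (nat \<Rightarrow> real) \<Rightarrow> real" where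
  "tangent q c d = (INF t\<in>{0..}. q (\<lambda>k. d k + t * c k) - t * q c)"

lemma tangent_le:
  assumes q: "sublinear q" and "0 \<le> t"
  shows "tangent q c d \<le> q (\<lambda>k. d k + t * c k) - t * q c"
proof -
  have "- q (\<lambda>k. - d k) \<le> q (\<lambda>k. d k + s * c k) - s * q c" if "0 \<le> s" for s
  proof -
    have "s * q c = q (\<lambda>k. (d k + s * c k) + - d k)"
      using sublinear_scale_nonneg[OF q that] by simp
    also have "\<dots> \<le> q (\<lambda>k. d k + s * c k) + q (\<lambda>k. - d k)"
      by (rule sublinear_add[OF q])
    finally show ?thesis by simp
  qed
  then have "bdd_below ((\<lambda>t. q (\<lambda>k. d k + t * c k) - t * q c) ` {0..})"
    by (intro bdd_belowI2) auto
  then show ?thesis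
    unfolding tangent_def using assms(2) by (intro cINF_lower) auto
qed

lemma tangent_greatest:
  assumes "\<And>t. 0 \<le> t \<Longrightarrow> x \<le> q (\<lambda>k. d k + t * c k) - t * q c"
  shows "x \<le> tangent q c d"
  unfolding tangent_def using assms by (intro cINF_greatest) auto

lemma tangent_le_self: "sublinear q \<Longrightarrow> tangent q c d \<le> q d"
  using tangent_le[of q 0] by simp

lemma tangent_neg_le: "sublinear q \<Longrightarrow> tangent q c (\<lambda>k. - c k) \<le> - q c"
  using tangent_le[of q 1 c "\<lambda>k. - c k"] by (simp add: sublinear_zero)

lemma depends_below_tangent:
  assumes "depends_below m q"
  shows "depends_below m (tangent q c)"
  unfolding depends_below_def tangent_def
proof (intro allI impI)
  fix d d' :: "nat \<Rightarrow> real"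
  assume "\<forall>k<m. d k = d' k"
  then have "q (\<lambda>k. d k + t * c k) = q (\<lambda>k. d' k + t * c k)" for t
    by (intro assms[unfolded depends_below_def, rule_format]) simp
  then show "(INF t\<in>{0..}. q (\<lambda>k. d k + t * c k) - t * q c)
    = (INF t\<in>{0..}. q (\<lambda>k. d' k + t * c k) - t * q c)" by simp
qed

lemma tangent_add:
  assumes q: "sublinear q"
  shows "tangent q c (\<lambda>k. x k + y k) \<le> tangent q c x + tangent q c y"
proof -
  let ?g = "\<lambda>d t. q (\<lambda>k. d k + t * c k) - t * q c"
  have "tangent q c (\<lambda>k. x k + y k) \<le> ?g x s + ?g y t" if "0 \<le> s" "0 \<le> t" for s t
  proof -
    have "tangent q c (\<lambda>k. x k + y k) \<le> ?g (\<lambda>k. x k + y k) (s + t)"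
      using that by (intro tangent_le[OF q]) auto
    also have "\<dots> \<le> ?g x s + ?g y t"
      using sublinear_add[OF q, of "\<lambda>k. x k + s * c k" "\<lambda>k. y k + t * c k"]
      by (simp add: algebra_simps)
    finally show ?thesis .
  qed
  then have "tangent q c (\<lambda>k. x k + y k) - ?g y t \<le> tangent q c x" if "0 \<le> t" for t
    using that by (intro tangent_greatest) (simp add: algebra_simps)
  then have "tangent q c (\<lambda>k. x k + y k) - tangent q c x \<le> tangent q c y"
    by (intro tangent_greatest) (simp add: algebra_simps)
  then show ?thesis by simp
qed

lemma tangent_scale_le:
  assumes q: "sublinear q" and "0 < s"
  shows "s * tangent q c x \<le> tangent q c (\<lambda>k. s * x k)"
proof (rule tangent_greatest)
  fix t :: real
  assume "0 \<le> t"
  have "(\<lambda>k. s * x k + t * c k) = (\<lambda>k. s * (x k + t / s * c k))"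
    using \<open>0 < s\<close> by (simp add: algebra_simps)
  then have "q (\<lambda>k. s * x k + t * c k) = s * q (\<lambda>k. x k + t / s * c k)"
    by (simp only: sublinear_scale[OF q \<open>0 < s\<close>])
  moreover have "tangent q c x \<le> q (\<lambda>k. x k + t / s * c k) - t / s * q c"
    using \<open>0 \<le> t\<close> \<open>0 < s\<close> by (intro tangent_le[OF q]) auto
  ultimately show "s * tangent q c x \<le> q (\<lambda>k. s * x k + t * c k) - t * q c"
    using mult_left_mono[of _ _ s] \<open>0 < s\<close> by (fastforce simp: algebra_simps)
qed

lemma sublinear_tangent:
  assumes q: "sublinear q"
  shows "sublinear (tangent q c)"
proof -
  have "tangent q c (\<lambda>k. s * x k) = s * tangent q c x" if "0 < s" for s x
  proof (rule antisym)
    have "inverse s * tangent q c (\<lambda>k. s * x k) \<le> tangent q c x"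
      using tangent_scale_le[OF q, of "inverse s" c "\<lambda>k. s * x k"] that
      by (simp add: mult.assoc[symmetric])
    then show "tangent q c (\<lambda>k. s * x k) \<le> s * tangent q c x"
      using that by (simp add: field_simps)
  qed (rule tangent_scale_le[OF q that])
  then show ?thesis by (simp add: sublinear_def tangent_add[OF q])
qed

lemma sublinear_norming_functional:
  assumes "sublinear q" and "depends_below m q"
  shows "\<exists>a. (\<forall>d. (\<Sum>k<m. a k * d k) \<le> q d) \<and> (\<Sum>k<m. a k * c k) = q c"
proof -
  obtain a where a: "\<And>d. (\<Sum>k<m. a k * d k) \<le> tangent q c d"
    using sublinear_dominates_functional[OF sublinear_tangent depends_below_tangent] assms
    by blast
  have dom: "(\<Sum>k<m. a k * d k) \<le> q d" for d
    using a tangent_le_self[OF assms(1)] order_trans by blast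
  have "- (\<Sum>k<m. a k * c k) \<le> - q c"
    using order_trans[OF a[of "\<lambda>k. - c k"] tangent_neg_le[OF assms(1)]] by (simp add: sum_negf)
  with dom[of c] have "(\<Sum>k<m. a k * c k) = q c" by linarith
  with dom show ?thesis by blast
qed

section \<open>Finite almost-norming families\<close>

lemma finite_grid_approximation:
  fixes m :: nat and \<delta> C :: real
  assumes "0 < \<delta>"
  shows "\<exists>G. finite G \<and> (\<forall>d. (\<forall>k<m. \<bar>d k\<bar> \<le> C) \<longrightarrow> (\<exists>c\<in>G. \<forall>k<m. \<bar>d k - c k\<bar> \<le> \<delta>))"
proof -
  define L where "L = \<lceil>C / \<delta>\<rceil>"
  define G where "G = {c. \<forall>k. (k \<in> {..<m} \<longrightarrow> c k \<in> (\<lambda>i. \<delta> * of_int i) ` {-L..L}) \<and>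
                              (k \<notin> {..<m} \<longrightarrow> c k = 0)}"
  have "finite G"
    unfolding G_def by (intro finite_set_of_finite_funs) auto
  moreover have "\<exists>c\<in>G. \<forall>k<m. \<bar>d k - c k\<bar> \<le> \<delta>" if d: "\<forall>k<m. \<bar>d k\<bar> \<le> C" for d
  proof
    define c where "c k = (if k < m then \<delta> * of_int \<lfloor>d k / \<delta>\<rfloor> else 0)" for k
    have "\<bar>d k - c k\<bar> \<le> \<delta>" if "k < m" for k
    proof -
      have "\<delta> * of_int \<lfloor>d k / \<delta>\<rfloor> \<le> d k"
        using mult_left_mono[OF of_int_floor_le[of "d k / \<delta>"], of \<delta>] assms by simp
      moreover have "d k < \<delta> * of_int \<lfloor>d k / \<delta>\<rfloor> + \<delta>"
        using mult_strict_left_mono[OF real_of_int_floor_add_one_gt[of "d k / \<delta>"] assms] assms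
        by (simp add: algebra_simps)
      ultimately show ?thesis using that by (simp add: c_def)
    qed
    then show "\<forall>k<m. \<bar>d k - c k\<bar> \<le> \<delta>" by blast
    have "\<lfloor>d k / \<delta>\<rfloor> \<in> {-L..L}" if "k < m" for k
    proof -
      have "\<bar>d k / \<delta>\<bar> \<le> C / \<delta>"
        using d that assms by (simp add: divide_right_mono)
      then have "- (C / \<delta>) \<le> d k / \<delta>" "d k / \<delta> \<le> C / \<delta>"
        by linarith+
      then have "\<lfloor>- (C / \<delta>)\<rfloor> \<le> \<lfloor>d k / \<delta>\<rfloor>" "\<lfloor>d k / \<delta>\<rfloor> \<le> \<lfloor>C / \<delta>\<rfloor>"
        by (simp_all add: floor_mono)
      then show ?thesis
        unfolding L_def using floor_le_ceiling[of "C / \<delta>"] by (simp add: ceiling_def)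
    qed
    then show "c \<in> G" by (auto simp: G_def c_def)
  qed
  ultimately show ?thesis by blast
qed

lemma dominated_functional_near_norming:
  assumes q: "sublinear q"
    and dom: "\<forall>d. (\<Sum>k<m. a k * d k) \<le> q d"
    and norming: "(\<Sum>k<m. a k * c k) = q c"
  shows "q b - q (\<lambda>k. b k - c k) - q (\<lambda>k. c k - b k) \<le> (\<Sum>k<m. a k * b k)"
proof -
  have "(\<Sum>k<m. a k * b k) = (\<Sum>k<m. a k * c k) - (\<Sum>k<m. a k * (c k - b k))"
    by (simp add: sum_subtractf[symmetric] algebra_simps)
  moreover have "q b \<le> q c + q (\<lambda>k. b k - c k)"
    using sublinear_add[OF q, of c "\<lambda>k. b k - c k"] by simp
  ultimately show ?thesis
    using dom[rule_format, of "\<lambda>k. c k - b k"] norming by linarith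
qed

lemma weighted_bound_le:
  fixes q :: "(nat \<Rightarrow> real) \<Rightarrow> real" and m :: nat
  assumes upper: "\<forall>d. q d \<le> (\<Sum>k<m. w k * \<bar>d k\<bar>)" and "\<forall>k<m. \<bar>e k\<bar> \<le> \<delta>"
  shows "q e \<le> \<delta> * (\<Sum>k<m. \<bar>w k\<bar>)"
proof -
  have "q e \<le> (\<Sum>k<m. w k * \<bar>e k\<bar>)" using upper by blast
  also have "\<dots> \<le> (\<Sum>k<m. \<bar>w k\<bar> * \<delta>)"
    using assms(2)
    by (intro sum_mono order_trans[OF mult_right_mono[OF abs_ge_self abs_ge_zero] mult_left_mono]) auto
  also have "\<dots> = \<delta> * (\<Sum>k<m. \<bar>w k\<bar>)" by (simp add: sum_distrib_left mult.commute)
  finally show ?thesis .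
qed

lemma finite_net_of_norming_functionals:
  assumes q: "sublinear q"
    and upper: "\<forall>d. q d \<le> (\<Sum>k<m. w k * \<bar>d k\<bar>)"
    and coercive: "\<forall>d k. k < m \<longrightarrow> \<bar>d k\<bar> \<le> C * q d"
    and N: "\<forall>c. (\<forall>d. (\<Sum>k<m. N c k * d k) \<le> q d) \<and> (\<Sum>k<m. N c k * c k) = q c"
    and "0 < \<epsilon>"
  shows "\<exists>G. finite G \<and> (\<forall>b. q b = 1 \<longrightarrow> (\<exists>c\<in>G. 1 \<le> (1 + \<epsilon>) * (\<Sum>k<m. N c k * b k)))"
proof -
  define M where "M = (\<Sum>k<m. \<bar>w k\<bar>)"
  define \<delta> where "\<delta> = \<epsilon> / (2 * (1 + \<epsilon>) * (M + 1))"
  have "0 \<le> M" by (simp add: M_def sum_nonneg)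
  then have "0 < \<delta>" using \<open>0 < \<epsilon>\<close> by (simp add: \<delta>_def)
  have "2 * \<delta> * M = \<epsilon> / (1 + \<epsilon>) * (M / (M + 1))"
    using \<open>0 < \<epsilon>\<close> \<open>0 \<le> M\<close> by (simp add: \<delta>_def divide_simps)
  also have "\<dots> \<le> \<epsilon> / (1 + \<epsilon>)"
    using \<open>0 < \<epsilon>\<close> \<open>0 \<le> M\<close> by (intro mult_left_le) auto
  finally have \<delta>M: "1 \<le> (1 + \<epsilon>) * (1 - 2 * \<delta> * M)"
    using \<open>0 < \<epsilon>\<close> by (simp add: field_simps)
  obtain G where "finite G" and G: "\<forall>d. (\<forall>k<m. \<bar>d k\<bar> \<le> C) \<longrightarrow> (\<exists>c\<in>G. \<forall>k<m. \<bar>d k - c k\<bar> \<le> \<delta>)"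
    using finite_grid_approximation[OF \<open>0 < \<delta>\<close>, of m C] by blast
  have "\<exists>c\<in>G. 1 \<le> (1 + \<epsilon>) * (\<Sum>k<m. N c k * b k)" if "q b = 1" for b
  proof -
    have "\<forall>k<m. \<bar>b k\<bar> \<le> C"
      using coercive \<open>q b = 1\<close> by (metis mult.right_neutral)
    then obtain c where "c \<in> G" and c: "\<forall>k<m. \<bar>b k - c k\<bar> \<le> \<delta>"
      using G by blast
    have Nc: "\<forall>d. (\<Sum>k<m. N c k * d k) \<le> q d" "(\<Sum>k<m. N c k * c k) = q c"
      using N by auto
    have "1 - 2 * \<delta> * M \<le> (\<Sum>k<m. N c k * b k)"
      using dominated_functional_near_norming[OF q Nc, of b] \<open>q b = 1\<close> c
        weighted_bound_le[OF upper, of "\<lambda>k. b k - c k" \<delta>]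
        weighted_bound_le[OF upper, of "\<lambda>k. c k - b k" \<delta>]
      by (simp add: M_def abs_minus_commute)
    then have "(1 + \<epsilon>) * (1 - 2 * \<delta> * M) \<le> (1 + \<epsilon>) * (\<Sum>k<m. N c k * b k)"
      using \<open>0 < \<epsilon>\<close> by (intro mult_left_mono) auto
    with \<delta>M \<open>c \<in> G\<close> show ?thesis by (meson order_trans)
  qed
  with \<open>finite G\<close> show ?thesis by blast
qed

lemma sublinear_almost_norming_family:
  assumes q: "sublinear q" and "depends_below m q"
    and upper: "\<forall>d. q d \<le> (\<Sum>k<m. w k * \<bar>d k\<bar>)"
    and coercive: "\<forall>d k. k < m \<longrightarrow> \<bar>d k\<bar> \<le> C * q d"
    and "0 < \<epsilon>"
  shows "\<exists>(J::nat) A. (\<forall>j<J. \<forall>d. (\<Sum>k<m. A j k * d k) \<le> q d) \<and>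
    (\<forall>d. 0 < q d \<longrightarrow> (\<exists>j<J. q d \<le> (1 + \<epsilon>) * (\<Sum>k<m. A j k * d k)))"
proof -
  have "\<forall>c. \<exists>a. (\<forall>d. (\<Sum>k<m. a k * d k) \<le> q d) \<and> (\<Sum>k<m. a k * c k) = q c"
    using sublinear_norming_functional[OF assms(1,2)] by (intro allI)
  then obtain N where N: "\<forall>c. (\<forall>d. (\<Sum>k<m. N c k * d k) \<le> q d) \<and> (\<Sum>k<m. N c k * c k) = q c"
    using choice[of "\<lambda>c a. (\<forall>d. (\<Sum>k<m. a k * d k) \<le> q d) \<and> (\<Sum>k<m. a k * c k) = q c"]
    by blast
  obtain G where "finite G"
    and G: "\<forall>b. q b = 1 \<longrightarrow> (\<exists>c\<in>G. 1 \<le> (1 + \<epsilon>) * (\<Sum>k<m. N c k * b k))"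
    using finite_net_of_norming_functionals[OF q upper coercive N \<open>0 < \<epsilon>\<close>] by blast
  obtain cs where cs: "set cs = G" using finite_list[OF \<open>finite G\<close>] by blast
  have "\<exists>j<length cs. q d \<le> (1 + \<epsilon>) * (\<Sum>k<m. N (cs ! j) k * d k)" if "0 < q d" for d
  proof -
    define b where "b k = inverse (q d) * d k" for k
    have "q b = 1"
      using sublinear_scale[OF q, of "inverse (q d)" d] \<open>0 < q d\<close> by (simp add: b_def[abs_def])
    then obtain c where "c \<in> set cs" and c: "1 \<le> (1 + \<epsilon>) * (\<Sum>k<m. N c k * b k)"
      using G cs by blast
    then obtain j where "j < length cs" and "cs ! j = c"
      by (auto simp: in_set_conv_nth)
    with c have j: "1 \<le> (1 + \<epsilon>) * (\<Sum>k<m. N (cs ! j) k * b k)" by simp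
    have "(\<Sum>k<m. N (cs ! j) k * d k) = q d * (\<Sum>k<m. N (cs ! j) k * b k)"
      using \<open>0 < q d\<close> by (simp add: b_def sum_distrib_left field_simps)
    then have "q d \<le> (1 + \<epsilon>) * (\<Sum>k<m. N (cs ! j) k * d k)"
      using mult_left_mono[OF j, of "q d"] \<open>0 < q d\<close> by (simp add: mult.left_commute)
    with \<open>j < length cs\<close> show ?thesis by blast
  qed
  then show ?thesis
    using N by (intro exI[of _ "length cs"] exI[of _ "\<lambda>j. N (cs ! j)"]) auto
qed

section \<open>One-unconditional basic sequences\<close>

lemma sublinear_norm_combination: "sublinear (\<lambda>b. norm (\<Sum>k<m. b k *\<^sub>R y k))"
proof -
  have "(\<Sum>k<m. (s * b k) *\<^sub>R y k) = s *\<^sub>R (\<Sum>k<m. b k *\<^sub>R y k)" for s b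
    by (simp add: scaleR_sum_right)
  then show ?thesis
    by (simp add: sublinear_def scaleR_add_left sum.distrib norm_triangle_ineq)
qed

lemma depends_below_norm_combination: "depends_below m (\<lambda>b. norm (\<Sum>k<m. b k *\<^sub>R y k))"
  unfolding depends_below_def by (metis (no_types, lifting) lessThan_iff sum.cong)

lemma norm_combination_le:
  fixes m :: nat
  shows "norm (\<Sum>k<m. b k *\<^sub>R y k) \<le> (\<Sum>k<m. norm (y k) * \<bar>b k\<bar>)"
  by (rule order_trans[OF norm_sum]) (simp add: mult.commute)

lemma one_uncond_basic_signs:
  assumes "one_uncond_basic m y" and "\<forall>k<m. s k = 1 \<or> s k = -1"
  shows "norm (\<Sum>k<m. (s k * b k) *\<^sub>R y k) = norm (\<Sum>k<m. b k *\<^sub>R y k)"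
  using assms unfolding one_uncond_basic_def by blast

lemma one_uncond_basic_coeff_le:
  assumes y: "one_uncond_basic m y" and "k < m"
  shows "\<bar>b k\<bar> * norm (y k) \<le> norm (\<Sum>i<m. b i *\<^sub>R y i)"
proof -
  define s where "s i = (if i = k then 1 else (-1::real))" for i
  have signs: "\<forall>i<m. s i = 1 \<or> s i = -1" by (simp add: s_def)
  have "(\<Sum>i<m. b i *\<^sub>R y i) + (\<Sum>i<m. (s i * b i) *\<^sub>R y i)
      = (\<Sum>i<m. (if i = k then 2 * b k else 0) *\<^sub>R y i)"
    by (simp add: sum.distrib[symmetric] scaleR_add_left[symmetric], intro sum.cong)
      (auto simp: s_def)
  also have "\<dots> = (2 * b k) *\<^sub>R y k"
    using \<open>k < m\<close> by (simp add: if_distrib[of "\<lambda>c. c *\<^sub>R y _"] cong: if_cong)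
  finally have "norm ((2 * b k) *\<^sub>R y k)
      \<le> norm (\<Sum>i<m. b i *\<^sub>R y i) + norm (\<Sum>i<m. (s i * b i) *\<^sub>R y i)"
    by (metis norm_triangle_ineq)
  then show ?thesis
    using one_uncond_basic_signs[OF y signs] by simp
qed

lemma one_uncond_basic_coeff_bound:
  assumes y: "one_uncond_basic m y"
  shows "\<exists>C. \<forall>b k. k < m \<longrightarrow> \<bar>b k\<bar> \<le> C * norm (\<Sum>i<m. b i *\<^sub>R y i)"
proof (intro exI allI impI)
  fix b k
  assume "k < m"
  have "0 < norm (y k)"
    using y \<open>k < m\<close> by (simp add: one_uncond_basic_def)
  then have "\<bar>b k\<bar> \<le> 1 / norm (y k) * norm (\<Sum>i<m. b i *\<^sub>R y i)"
    using one_uncond_basic_coeff_le[OF y \<open>k < m\<close>] by (simp add: field_simps)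
  also have "\<dots> \<le> (\<Sum>i<m. 1 / norm (y i)) * norm (\<Sum>i<m. b i *\<^sub>R y i)"
    using \<open>k < m\<close> by (intro mult_right_mono member_le_sum) auto
  finally show "\<bar>b k\<bar> \<le> (\<Sum>i<m. 1 / norm (y i)) * norm (\<Sum>i<m. b i *\<^sub>R y i)" .
qed

lemma one_uncond_basic_dominated_abs:
  assumes y: "one_uncond_basic m y"
    and dom: "\<forall>d. (\<Sum>k<m. a k * d k) \<le> norm (\<Sum>k<m. d k *\<^sub>R y k)"
  shows "(\<Sum>k<m. \<bar>a k * b k\<bar>) \<le> norm (\<Sum>k<m. b k *\<^sub>R y k)"
proof -
  define s where "s k = (if 0 \<le> a k * b k then 1 else (-1::real))" for k
  have signs: "\<forall>k<m. s k = 1 \<or> s k = -1" by (simp add: s_def)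
  have "(\<Sum>k<m. \<bar>a k * b k\<bar>) = (\<Sum>k<m. a k * (s k * b k))"
    by (intro sum.cong) (auto simp: s_def abs_if)
  also have "\<dots> \<le> norm (\<Sum>k<m. (s k * b k) *\<^sub>R y k)"
    using dom[rule_format, of "\<lambda>k. s k * b k"] by simp
  also have "\<dots> = norm (\<Sum>k<m. b k *\<^sub>R y k)"
    by (rule one_uncond_basic_signs[OF y signs])
  finally show ?thesis .
qed

lemma norming_family_rows_nonzero:
  fixes m J :: nat
  assumes norming: "\<forall>d. 0 < norm (\<Sum>k<m. d k *\<^sub>R y k) \<longrightarrow>
      (\<exists>j<J. norm (\<Sum>k<m. d k *\<^sub>R y k) \<le> c * (\<Sum>k<m. A j k * d k))"
    and "k < m" and "y k \<noteq> 0"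
  shows "\<exists>j<J. A j k \<noteq> 0"
proof -
  define e where "e i = (if i = k then 1 else (0::real))" for i
  have "(\<Sum>i<m. e i *\<^sub>R y i) = (\<Sum>i<m. if i = k then y k else 0)"
    and "(\<Sum>i<m. A j i * e i) = (\<Sum>i<m. if i = k then A j k else 0)" for j
    by (intro sum.cong; simp add: e_def)+
  then have "(\<Sum>i<m. e i *\<^sub>R y i) = y k" and "(\<Sum>i<m. A j i * e i) = A j k" for j
    using \<open>k < m\<close> by (simp_all add: sum.delta)
  then obtain j where "j < J" and "norm (y k) \<le> c * A j k"
    using norming[rule_format, of e] \<open>y k \<noteq> 0\<close> by auto
  then show ?thesis using \<open>y k \<noteq> 0\<close> by force
qed

lemma one_uncond_basic_almost_norming_family:
  assumes y: "one_uncond_basic m y" and "0 < \<epsilon>"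
  shows "\<exists>(J::nat) A. (\<forall>j<J. \<forall>b. (\<Sum>k<m. \<bar>A j k * b k\<bar>) \<le> norm (\<Sum>k<m. b k *\<^sub>R y k)) \<and>
    (\<forall>d. 0 < norm (\<Sum>k<m. d k *\<^sub>R y k) \<longrightarrow>
       (\<exists>j<J. norm (\<Sum>k<m. d k *\<^sub>R y k) \<le> (1 + \<epsilon>) * (\<Sum>k<m. A j k * d k))) \<and>
    (\<forall>k<m. \<exists>j<J. A j k \<noteq> 0)"
proof -
  obtain C where "\<forall>b k. k < m \<longrightarrow> \<bar>b k\<bar> \<le> C * norm (\<Sum>i<m. b i *\<^sub>R y i)"
    using one_uncond_basic_coeff_bound[OF y] by blast
  then obtain J :: nat and A
    where dom: "\<forall>j<J. \<forall>d. (\<Sum>k<m. A j k * d k) \<le> norm (\<Sum>k<m. d k *\<^sub>R y k)"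
    and norming: "\<forall>d. 0 < norm (\<Sum>k<m. d k *\<^sub>R y k) \<longrightarrow>
       (\<exists>j<J. norm (\<Sum>k<m. d k *\<^sub>R y k) \<le> (1 + \<epsilon>) * (\<Sum>k<m. A j k * d k))"
    using sublinear_almost_norming_family[OF sublinear_norm_combination[where m = m and y = y]
        depends_below_norm_combination[where m = m and y = y] allI[OF norm_combination_le] _ \<open>0 < \<epsilon>\<close>]
    by blast
  moreover have "\<forall>k<m. \<exists>j<J. A j k \<noteq> 0"
    using norming_family_rows_nonzero[OF norming] y by (simp add: one_uncond_basic_def)
  ultimately show ?thesis
    using one_uncond_basic_dominated_abs[OF y] by blast
qed

section \<open>Row blocks in the operator space\<close>

lemma opnorm_nonneg: "0 \<le> opnorm n a"
  unfolding opnorm_def by (intro Max_ge) auto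

lemma column_sum_le_opnorm: "j < n \<Longrightarrow> (\<Sum>i<n. \<bar>a i j\<bar>) \<le> opnorm n a"
  unfolding opnorm_def by (intro Max_ge) auto

lemma opnorm_le: "0 \<le> B \<Longrightarrow> \<forall>j<n. (\<Sum>i<n. \<bar>a i j\<bar>) \<le> B \<Longrightarrow> opnorm n a \<le> B"
  unfolding opnorm_def by (intro Max.boundedI) auto

definition row_block :: "nat \<Rightarrow> (nat \<Rightarrow> nat \<Rightarrow> real) \<Rightarrow> nat \<Rightarrow> nat \<Rightarrow> nat \<Rightarrow> real" where
  "row_block J A k i j = (if i = k \<and> j < J then A j k else 0)"

lemma is_block_basis_row_block:
  assumes "m \<le> n" and "J \<le> n" and nonzero: "\<forall>k<m. \<exists>j<J. A j k \<noteq> 0"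
  shows "is_block_basis n m (row_block J A)"
proof -
  have "\<forall>k<m. \<forall>i j. row_block J A k i j \<noteq> 0 \<longrightarrow> i < n \<and> j < n"
    using assms by (auto simp: row_block_def)
  moreover have "mat_supp n (row_block J A k) \<noteq> {}" if "k < m" for k
  proof -
    obtain j where "j < J" "A j k \<noteq> 0" using nonzero \<open>k < m\<close> by blast
    then have "(k, j) \<in> mat_supp n (row_block J A k)"
      using \<open>k < m\<close> assms by (auto simp: mat_supp_def row_block_def)
    then show ?thesis by blast
  qed
  moreover have "lexpos n p < lexpos n q"
    if "k < l" and p_supp: "p \<in> mat_supp n (row_block J A k)"
      and q_supp: "q \<in> mat_supp n (row_block J A l)"
    for k l p q
  proof -
    obtain j where p: "p = (k, j)" "j < n"
      using p_supp by (auto simp: mat_supp_def row_block_def split: if_splits)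
    obtain j' where q: "q = (l, j')"
      using q_supp by (auto simp: mat_supp_def row_block_def split: if_splits)
    have "Suc k * n \<le> l * n" using \<open>k < l\<close> by (intro mult_le_mono1) simp
    then show ?thesis using p q by (simp add: lexpos_def)
  qed
  ultimately show ?thesis unfolding is_block_basis_def by blast
qed

lemma column_sum_row_block:
  assumes "m \<le> n"
  shows "(\<Sum>i<n. \<bar>\<Sum>k<m. b k * row_block J A k i j\<bar>)
    = (if j < J then (\<Sum>k<m. \<bar>A j k * b k\<bar>) else 0)"
proof -
  have entry: "(\<Sum>k<m. b k * row_block J A k i j) = (if i < m \<and> j < J then A j i * b i else 0)"
    for i
  proof -
    have "(\<Sum>k<m. b k * row_block J A k i j) = (\<Sum>k<m. if k = i then b i * row_block J A i i j else 0)"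
      by (intro sum.cong) (auto simp: row_block_def)
    then show ?thesis by (simp add: row_block_def mult.commute)
  qed
  have "(\<Sum>i<n. \<bar>\<Sum>k<m. b k * row_block J A k i j\<bar>) = (\<Sum>i<m. \<bar>\<Sum>k<m. b k * row_block J A k i j\<bar>)"
    using assms by (intro sum.mono_neutral_right) (auto simp: entry)
  also have "\<dots> = (if j < J then (\<Sum>k<m. \<bar>A j k * b k\<bar>) else 0)"
    by (simp add: entry)
  finally show ?thesis .
qed

lemma opnorm_row_block_bounds:
  assumes "m \<le> n" and "J \<le> n" and "0 \<le> N"
    and dom: "\<forall>j<J. (\<Sum>k<m. \<bar>A j k * b k\<bar>) \<le> N"
    and norming: "0 < N \<Longrightarrow> \<exists>j<J. N \<le> c * (\<Sum>k<m. A j k * b k)"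
    and "0 \<le> c"
  shows "N \<le> c * opnorm n (\<lambda>i j. \<Sum>k<m. b k * row_block J A k i j)"
    and "opnorm n (\<lambda>i j. \<Sum>k<m. b k * row_block J A k i j) \<le> N"
proof -
  let ?x = "\<lambda>i j. \<Sum>k<m. b k * row_block J A k i j"
  note column = column_sum_row_block[OF \<open>m \<le> n\<close>]
  have "(\<Sum>i<n. \<bar>?x i j\<bar>) \<le> N" for j
    using column[of b J A j] dom \<open>0 \<le> N\<close> by (cases "j < J") auto
  then show "opnorm n ?x \<le> N"
    using \<open>0 \<le> N\<close> by (intro opnorm_le) auto
  show "N \<le> c * opnorm n ?x"
  proof (cases "N = 0")
    case True
    then show ?thesis using opnorm_nonneg \<open>0 \<le> c\<close> by simp
  next
    case False
    with \<open>0 \<le> N\<close> norming obtain j where "j < J" and j: "N \<le> c * (\<Sum>k<m. A j k * b k)"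
      by force
    have "(\<Sum>k<m. A j k * b k) \<le> (\<Sum>k<m. \<bar>A j k * b k\<bar>)"
      by (intro sum_mono) simp
    also have "\<dots> \<le> opnorm n ?x"
      using column_sum_le_opnorm[of j n ?x] \<open>j < J\<close> \<open>J \<le> n\<close> by (simp add: column)
    finally show ?thesis
      using j \<open>0 \<le> c\<close> by (meson mult_left_mono order_trans)
  qed
qed

theorem proposition2p2:
  fixes m :: nat and y :: "nat \<Rightarrow> 'a::banach" and \<epsilon> :: real
  assumes "one_uncond_basic m y" and "\<epsilon> > 0"
  shows "\<exists>n::nat. \<exists>x :: nat \<Rightarrow> nat \<Rightarrow> nat \<Rightarrow> real. is_block_basis n m x \<and>
    (\<forall>b::nat \<Rightarrow> real.
       inverse (1 + \<epsilon>) * norm (\<Sum>k<m. b k *\<^sub>R y k)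
         \<le> opnorm n (\<lambda>i j. \<Sum>k<m. b k * x k i j) \<and>
       opnorm n (\<lambda>i j. \<Sum>k<m. b k * x k i j)
         \<le> (1 + \<epsilon>) * norm (\<Sum>k<m. b k *\<^sub>R y k))"
proof -
  let ?N = "\<lambda>b. norm (\<Sum>k<m. b k *\<^sub>R y k)"
  obtain J :: nat and A where dom: "\<forall>j<J. \<forall>b. (\<Sum>k<m. \<bar>A j k * b k\<bar>) \<le> ?N b"
    and norming: "\<forall>d. 0 < ?N d \<longrightarrow> (\<exists>j<J. ?N d \<le> (1 + \<epsilon>) * (\<Sum>k<m. A j k * d k))"
    and rows: "\<forall>k<m. \<exists>j<J. A j k \<noteq> 0"
    using one_uncond_basic_almost_norming_family[OF assms] by blast
  define n where "n = max m J"
  have "is_block_basis n m (row_block J A)"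
    using rows by (intro is_block_basis_row_block) (auto simp: n_def)
  moreover have lower: "?N b \<le> (1 + \<epsilon>) * opnorm n (\<lambda>i j. \<Sum>k<m. b k * row_block J A k i j)"
    and upper: "opnorm n (\<lambda>i j. \<Sum>k<m. b k * row_block J A k i j) \<le> ?N b" for b
    using opnorm_row_block_bounds[of m n J "?N b" A b "1 + \<epsilon>"] dom norming assms(2)
    by (auto simp: n_def)
  ultimately show ?thesis
  proof (intro exI[of _ n] exI[of _ "row_block J A"] conjI allI)
    fix b :: "nat \<Rightarrow> real"
    show "inverse (1 + \<epsilon>) * ?N b \<le> opnorm n (\<lambda>i j. \<Sum>k<m. b k * row_block J A k i j)"
      using lower[of b] assms(2) by (simp add: field_simps)
    have "?N b \<le> (1 + \<epsilon>) * ?N b"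
      using mult_right_mono[of 1 "1 + \<epsilon>" "?N b"] assms(2) by simp
    then show "opnorm n (\<lambda>i j. \<Sum>k<m. b k * row_block J A k i j) \<le> (1 + \<epsilon>) * ?N b"
      using upper[of b] by linarith
  qed
qed

end
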